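(* Let $(V,\mathcal H,\iota,W)$ be an abelian generalized functional theory with set of weights $\Omega$. Then $\iota^*(\mathcal P)=\iota^*(\mathcal E)=\mathrm{conv}(\Omega)$.
   Context: A generalized functional theory is a tuple $(V,\mathcal H,\iota,W)$ with $V$ a finite-dimensional real vector space, $\mathcal H$ a finite-dimensional complex Hilbert space, $\iota:V\to i\mathfrak u(\mathcal H)$ a linear map into the Hermitian operators, and $W$ Hermitian. States are regarded as linear functionals on $i\mathfrak u(\mathcal H)$ via the trace; $\iota^*$ is the dual map, $\langle\iota^*(\Gamma),v\rangle=\mathrm{Tr}(\Gamma\iota(v))$. $\mathcal P$ is the set of pure states (rank-one orthogonal projectors) and $\mathcal E$ the set of density operators. The theory is abelian if $[\iota(v),\iota(v')]=0$ for all $v,v'$. A weight is an $\alpha\in V^*$ for which there is a nonzero $\psi\in\mathcal H$ with $\iota(v)\psi=\langle\alpha,v\rangle\psi$ for all $v\in V$; $\Omega$ is the set of weights. *)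

theory Defs
  imports "HOL-Analysis.Analysis"
begin

text \<open>Operators on H = complex^'n are represented as matrices complex^'n^'n.\<close>

definition hermitian :: "complex^'n^'n \<Rightarrow> bool" where
  "hermitian A \<longleftrightarrow> (\<forall>i j. A$i$j = cnj (A$j$i))"

definition cinner :: "complex^'n \<Rightarrow> complex^'n \<Rightarrow> complex" where
  "cinner x y = (\<Sum>i\<in>UNIV. cnj (x$i) * y$i)"

definition pure_states :: "(complex^'n^'n) set" where
  "pure_states = {\<Gamma>. \<exists>\<psi>::complex^'n. cinner \<psi> \<psi> = 1 \<and>
                          \<Gamma> = (\<chi> i j. \<psi>$i * cnj (\<psi>$j))}"

definition density_ops :: "(complex^'n^'n) set" where
  "density_ops = {\<Gamma>. hermitian \<Gamma> \<and> (\<forall>x. 0 \<le> Re (cinner x (\<Gamma> *v x))) \<and> trace \<Gamma> = 1}"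

definition gft :: "('v::real_vector \<Rightarrow> complex^'n^'n) \<Rightarrow> complex^'n^'n \<Rightarrow> bool" where
  "gft \<iota> W \<longleftrightarrow> linear \<iota> \<and> (\<forall>v. hermitian (\<iota> v)) \<and> hermitian W"

definition abelian :: "('v \<Rightarrow> complex^'n^'n) \<Rightarrow> bool" where
  "abelian \<iota> \<longleftrightarrow> (\<forall>v v'. \<iota> v ** \<iota> v' = \<iota> v' ** \<iota> v)"

definition dual_map :: "('v \<Rightarrow> complex^'n^'n) \<Rightarrow> complex^'n^'n \<Rightarrow> ('v \<Rightarrow> real)" where
  "dual_map \<iota> \<Gamma> = (\<lambda>v. Re (trace (\<Gamma> ** \<iota> v)))"

definition weights :: "('v::real_vector \<Rightarrow> complex^'n^'n) \<Rightarrow> ('v \<Rightarrow> real) set" where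
  "weights \<iota> = {\<alpha>. linear \<alpha> \<and> (\<exists>\<psi>::complex^'n. \<psi> \<noteq> 0 \<and>
                  (\<forall>v. \<iota> v *v \<psi> = complex_of_real (\<alpha> v) *s \<psi>))}"

definition conv_dual :: "('v \<Rightarrow> real) set \<Rightarrow> ('v \<Rightarrow> real) set" where
  "conv_dual S = {(\<lambda>v. \<Sum>i<m. c i * f i v) | (m::nat) c f.
                    (\<forall>i<m. 0 \<le> c i \<and> f i \<in> S) \<and> (\<Sum>i<m. c i) = 1}"

end

(*
  Commuting Hermitian operators iota(v) have a common orthonormal eigenbasis e_j,
  iota(v) e_j = alpha_j(v) e_j: a maximiser of the quadratic form x . A x on an invariant
  subspace is an eigenvector of A, the eigenspaces of one operator are invariant under
  the others, and the orthogonal complement of common eigenvectors is again invariant.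
  The weights are exactly the alpha_j. For a density operator Gamma,
  Tr(Gamma iota(v)) = sum_j <e_j, Gamma e_j> alpha_j(v) with nonnegative coefficients
  summing to Tr Gamma = 1, so iota*(E) lies in conv(Omega); conversely sum_j d_j alpha_j
  is iota* of the pure state of psi = sum_j sqrt(d_j) e_j. Together with P <= E this
  closes the chain iota*(P) <= iota*(E) <= conv(Omega) <= iota*(P).
*)

theory Submission
  imports Defs
begin

section \<open>The complex inner product on \<open>complex^'n\<close>\<close>

lemma inner_vec_eq_Re_cinner: "(x::complex^'n) \<bullet> y = Re (cinner x y)"
  by (simp add: inner_vec_def cinner_def inner_complex_def Re_sum)

lemma cinner_add_left: "cinner (x + y) z = cinner x z + cinner y z"
  by (simp add: cinner_def sum.distrib algebra_simps)

lemma cinner_add_right: "cinner z (x + y) = cinner z x + cinner z y"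
  by (simp add: cinner_def sum.distrib algebra_simps)

lemma cinner_scaleC_left: "cinner (c *s x) z = cnj c * cinner x z"
  by (simp add: cinner_def sum_distrib_left algebra_simps)

lemma cinner_scaleC_right: "cinner z (c *s x) = c * cinner z x"
  by (simp add: cinner_def sum_distrib_left algebra_simps)

lemma scaleR_eq_scaleC: "c *\<^sub>R (x::complex^'n) = complex_of_real c *s x"
  by (simp add: vec_eq_iff scaleR_conv_of_real[where 'a=complex])

lemma cinner_scaleR_left: "cinner (c *\<^sub>R x) z = complex_of_real c * cinner x z"
  by (simp add: scaleR_eq_scaleC cinner_scaleC_left)

lemma cinner_scaleR_right: "cinner z (c *\<^sub>R x) = complex_of_real c * cinner z x"
  by (simp add: scaleR_eq_scaleC cinner_scaleC_right)

lemma cinner_zero_left [simp]: "cinner 0 z = 0"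
  by (simp add: cinner_def)

lemma cinner_zero_right [simp]: "cinner z 0 = 0"
  by (simp add: cinner_def)

lemma cinner_sum_left: "cinner (sum f F) z = (\<Sum>i\<in>F. cinner (f i) z)"
  by (induction F rule: infinite_finite_induct) (auto simp: cinner_add_left)

lemma cinner_sum_right: "cinner z (sum f F) = (\<Sum>i\<in>F. cinner z (f i))"
  by (induction F rule: infinite_finite_induct) (auto simp: cinner_add_right)

lemma cinner_commute: "cinner y x = cnj (cinner x y)"
  unfolding cinner_def cnj_sum by (simp add: mult.commute)

lemma cinner_self: "cinner x x = complex_of_real ((norm x)\<^sup>2)"
proof -
  have "cinner x x = (\<Sum>i\<in>UNIV. complex_of_real ((cmod (x$i))\<^sup>2))"
    unfolding cinner_def by (simp add: complex_norm_square[symmetric] mult.commute)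
  also have "\<dots> = complex_of_real ((norm x)\<^sup>2)"
    unfolding norm_vec_def L2_set_def by (simp add: sum_nonneg)
  finally show ?thesis .
qed

lemma matrix_vector_mult_scaleR_right:
  fixes A :: "'a::real_algebra_1^'n^'m"
  shows "A *v (c *\<^sub>R x) = c *\<^sub>R (A *v x)"
  using linear_scale[OF matrix_vector_mul_linear] .

lemma matrix_vector_mult_scaleC_right: "(A::complex^'n^'m) *v (c *s x) = c *s (A *v x)"
  by (simp add: vec_eq_iff matrix_vector_mult_def sum_distrib_left algebra_simps)

lemma matrix_vector_mult_sum_right:
  fixes A :: "'a::real_algebra_1^'n^'m"
  shows "A *v sum g F = (\<Sum>j\<in>F. A *v g j)"
  using linear_sum[OF matrix_vector_mul_linear] .

lemma linear_matrix_vector_mult_left: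
  "linear (\<lambda>A::'a::real_algebra_1^'n^'m. A *v x)"
proof (rule linearI)
  fix c :: real and A :: "'a^'n^'m"
  show "(c *\<^sub>R A) *v x = c *\<^sub>R (A *v x)"
    by (simp add: vec_eq_iff matrix_vector_mult_def scaleR_sum_right)
qed (rule matrix_vector_mult_add_rdistrib)

lemma cinner_hermitian:
  assumes "hermitian A"
  shows "cinner (A *v x) y = cinner x (A *v y)"
proof -
  have conj_entry: "cnj (A$i$j) = A$j$i" for i j
    using assms complex_cnj_cnj unfolding hermitian_def by metis
  have "cinner (A *v x) y = (\<Sum>i\<in>UNIV. \<Sum>j\<in>UNIV. cnj (x$j) * A$j$i * y$i)"
    unfolding cinner_def matrix_vector_mult_def vec_lambda_beta cnj_sum sum_distrib_right
    by (intro sum.cong refl) (simp add: conj_entry)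
  also have "\<dots> = (\<Sum>j\<in>UNIV. \<Sum>i\<in>UNIV. cnj (x$j) * A$j$i * y$i)"
    by (rule sum.swap)
  also have "\<dots> = cinner x (A *v y)"
    unfolding cinner_def matrix_vector_mult_def by (simp add: sum_distrib_left mult.assoc)
  finally show ?thesis .
qed

lemma inner_hermitian: "hermitian A \<Longrightarrow> (A *v x) \<bullet> y = x \<bullet> (A *v y)"
  by (simp add: inner_vec_eq_Re_cinner cinner_hermitian)
section \<open>Common eigenvectors of commuting Hermitian matrices\<close>

lemma linear_coeff_zero_if_dominated_by_square:
  fixes r C :: real
  assumes "\<And>t. 2 * t * r \<le> t\<^sup>2 * C"
  shows "r = 0"
proof (rule ccontr)
  assume "r \<noteq> 0"
  define d where "d = \<bar>C\<bar> + 1"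
  have "d > 0" unfolding d_def by simp
  have "2 * (r / d) * r \<le> (r / d)\<^sup>2 * C" by (rule assms)
  then have "2 * r\<^sup>2 * d \<le> r\<^sup>2 * C"
    using \<open>d > 0\<close> by (simp add: field_simps power2_eq_square)
  then have "2 * d \<le> C"
    using \<open>r \<noteq> 0\<close> by (simp add: mult.assoc)
  then show False
    unfolding d_def by (cases "C \<ge> 0") auto
qed

lemma hermitian_eigenvector_in_invariant_subspace:
  fixes A :: "complex^'n^'n"
  assumes herm: "hermitian A" and S: "subspace S" "S \<noteq> {0}"
    and invariant: "\<And>x. x \<in> S \<Longrightarrow> A *v x \<in> S"
  shows "\<exists>x\<in>S. x \<noteq> 0 \<and> (\<exists>\<mu>::real. A *v x = \<mu> *\<^sub>R x)"
proof -
  define f where "f x = x \<bullet> (A *v x)" for x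
  define K where "K = sphere 0 1 \<inter> S"
  have "compact K"
    unfolding K_def by (intro compact_Int_closed compact_sphere closed_subspace S)
  obtain y where "y \<in> S" "y \<noteq> 0"
    using S subspace_0 by blast
  then have "y /\<^sub>R norm y \<in> K"
    using S unfolding K_def by (simp add: subspace_scale)
  moreover have "continuous_on K f"
    unfolding f_def by (intro continuous_intros linear_continuous_on matrix_vector_mul_bounded_linear)
  ultimately obtain x0 where x0: "x0 \<in> K" and max: "\<And>y. y \<in> K \<Longrightarrow> f y \<le> f x0"
    using continuous_attains_sup[OF \<open>compact K\<close>] by blast
  define \<mu> where "\<mu> = f x0"
  have f_scale: "f (c *\<^sub>R z) = c\<^sup>2 * f z" for c z
    unfolding f_def by (simp add: matrix_vector_mult_scaleR_right power2_eq_square)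
  have bound: "f z \<le> \<mu> * (norm z)\<^sup>2" if "z \<in> S" for z
  proof (cases "z = 0")
    case True
    then show ?thesis by (simp add: f_def)
  next
    case False
    have "z /\<^sub>R norm z \<in> K"
      using \<open>z \<in> S\<close> S False unfolding K_def by (simp add: subspace_scale)
    then have "f (z /\<^sub>R norm z) \<le> \<mu>"
      unfolding \<mu>_def by (rule max)
    then have "f z / (norm z)\<^sup>2 \<le> \<mu>"
      using f_scale[of "inverse (norm z)" z] by (simp add: power_inverse divide_inverse mult.commute)
    then show ?thesis
      using False by (simp add: divide_le_eq mult.commute)
  qed
  have "x0 \<in> S" "norm x0 = 1"
    using x0 unfolding K_def by auto
  \<comment> \<open>The first variation of \<open>f - \<mu> * norm\<^sup>2\<close> at its maximiser \<open>x0\<close> in the direction \<open>w\<close>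
    vanishes; this forces \<open>w = 0\<close>.\<close>
  define w where "w = A *v x0 - \<mu> *\<^sub>R x0"
  have "w \<in> S"
    unfolding w_def using invariant \<open>x0 \<in> S\<close> S by (simp add: subspace_diff subspace_scale)
  have "2 * t * (norm w)\<^sup>2 \<le> t\<^sup>2 * (\<mu> * (norm w)\<^sup>2 - f w)" for t
  proof -
    have "x0 + t *\<^sub>R w \<in> S"
      using \<open>x0 \<in> S\<close> \<open>w \<in> S\<close> S by (simp add: subspace_add subspace_scale)
    then have "f (x0 + t *\<^sub>R w) \<le> \<mu> * (norm (x0 + t *\<^sub>R w))\<^sup>2"
      by (rule bound)
    moreover have "f (x0 + t *\<^sub>R w) = \<mu> + 2 * t * (w \<bullet> (A *v x0)) + t\<^sup>2 * f w"
      using inner_hermitian[OF herm, of w x0] unfolding f_def \<mu>_def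
      by (simp add: matrix_vector_right_distrib matrix_vector_mult_scaleR_right inner_add_left
          inner_add_right inner_commute algebra_simps power2_eq_square)
    moreover have "(norm (x0 + t *\<^sub>R w))\<^sup>2 = 1 + 2 * t * (w \<bullet> x0) + t\<^sup>2 * (norm w)\<^sup>2"
      using \<open>norm x0 = 1\<close> unfolding power2_norm_eq_inner
      by (simp add: inner_add_left inner_add_right inner_commute norm_eq_1 algebra_simps power2_eq_square)
    moreover have "w \<bullet> (A *v x0) = (norm w)\<^sup>2 + \<mu> * (w \<bullet> x0)"
      by (simp add: w_def power2_norm_eq_inner inner_diff_right)
    ultimately show ?thesis
      by (simp add: algebra_simps)
  qed
  then have "(norm w)\<^sup>2 = 0"
    by (rule linear_coeff_zero_if_dominated_by_square)
  then have "A *v x0 = \<mu> *\<^sub>R x0"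
    by (simp add: w_def)
  moreover have "x0 \<noteq> 0"
    using \<open>norm x0 = 1\<close> by auto
  ultimately show ?thesis
    using \<open>x0 \<in> S\<close> by blast
qed

lemma commuting_hermitian_common_eigenvector:
  fixes F :: "(complex^'n^'n) set"
  assumes "finite F" and "\<And>A. A \<in> F \<Longrightarrow> hermitian A"
    and "\<And>A B. A \<in> F \<Longrightarrow> B \<in> F \<Longrightarrow> A ** B = B ** A"
    and "subspace S" "S \<noteq> {0}" and "\<And>A x. A \<in> F \<Longrightarrow> x \<in> S \<Longrightarrow> A *v x \<in> S"
  shows "\<exists>x\<in>S. x \<noteq> 0 \<and> (\<forall>A\<in>F. \<exists>\<mu>::real. A *v x = \<mu> *\<^sub>R x)"
  using assms
proof (induction F arbitrary: S rule: finite_induct)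
  case empty
  then show ?case
    using subspace_0 by blast
next
  case (insert A F)
  obtain x0 \<mu> where "x0 \<in> S" "x0 \<noteq> 0" "A *v x0 = \<mu> *\<^sub>R x0"
    using hermitian_eigenvector_in_invariant_subspace[of A S] insert.prems by blast
  define E where "E = {x \<in> S. A *v x = \<mu> *\<^sub>R x}"
  have "subspace E"
    using \<open>subspace S\<close> unfolding E_def subspace_def
    by (simp add: matrix_vector_right_distrib matrix_vector_mult_scaleR_right scaleR_add_right)
  moreover have "E \<noteq> {0}"
    using \<open>x0 \<in> S\<close> \<open>x0 \<noteq> 0\<close> \<open>A *v x0 = \<mu> *\<^sub>R x0\<close> unfolding E_def by blast
  moreover have "B *v x \<in> E" if "B \<in> F" "x \<in> E" for B x
  proof -
    have "A *v (B *v x) = B *v (A *v x)"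
      using insert.prems(2)[of A B] \<open>B \<in> F\<close> by (simp add: matrix_vector_mul_assoc)
    then show ?thesis
      using insert.prems(5)[of B x] that unfolding E_def by (simp add: matrix_vector_mult_scaleR_right)
  qed
  ultimately obtain x where "x \<in> E" "x \<noteq> 0" "\<forall>B\<in>F. \<exists>\<mu>::real. B *v x = \<mu> *\<^sub>R x"
    using insert.IH[of E] insert.prems by blast
  then show ?case
    unfolding E_def by blast
qed

lemma subspace_real_eigen_matrices: "subspace {A::complex^'n^'n. \<exists>\<mu>::real. A *v x = \<mu> *\<^sub>R x}"
proof -
  have "{A::complex^'n^'n. \<exists>\<mu>::real. A *v x = \<mu> *\<^sub>R x} = (\<lambda>A. A *v x) -` span {x}"
    by (auto simp: span_singleton)
  then show ?thesis
    using linear_subspace_vimage[OF linear_matrix_vector_mult_left subspace_span] by simp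
qed

lemma abelian_common_eigenvector:
  fixes \<iota> :: "'v::euclidean_space \<Rightarrow> complex^'n^'n"
  assumes "linear \<iota>" and "\<And>v. hermitian (\<iota> v)" and "abelian \<iota>"
    and "subspace S" "S \<noteq> {0}" and "\<And>v x. x \<in> S \<Longrightarrow> \<iota> v *v x \<in> S"
  shows "\<exists>x\<in>S. x \<noteq> 0 \<and> (\<forall>v. \<exists>\<mu>::real. \<iota> v *v x = \<mu> *\<^sub>R x)"
proof -
  have "\<exists>x\<in>S. x \<noteq> 0 \<and> (\<forall>A\<in>\<iota> ` Basis. \<exists>\<mu>::real. A *v x = \<mu> *\<^sub>R x)"
    using assms by (intro commuting_hermitian_common_eigenvector) (auto simp: abelian_def)
  then obtain x where "x \<in> S" "x \<noteq> 0"
    and "\<iota> ` Basis \<subseteq> {A. \<exists>\<mu>::real. A *v x = \<mu> *\<^sub>R x}"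
    by blast
  then have "span (\<iota> ` Basis) \<subseteq> {A. \<exists>\<mu>::real. A *v x = \<mu> *\<^sub>R x}"
    by (intro span_minimal subspace_real_eigen_matrices)
  moreover have "span (\<iota> ` Basis) = range \<iota>"
    using span_linear_image[OF \<open>linear \<iota>\<close>] by simp
  ultimately show ?thesis
    using \<open>x \<in> S\<close> \<open>x \<noteq> 0\<close> by blast
qed
section \<open>Orthonormal eigenbases\<close>

definition orthonormal_on :: "('j \<Rightarrow> complex^'n) \<Rightarrow> 'j set \<Rightarrow> bool" where
  "orthonormal_on e K \<longleftrightarrow> (\<forall>j\<in>K. \<forall>k\<in>K. cinner (e j) (e k) = (if j = k then 1 else 0))"

lemma exists_nonzero_orthogonal:
  fixes e :: "'n \<Rightarrow> complex^'n"
  assumes "a \<notin> K"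
  shows "\<exists>x. x \<noteq> 0 \<and> (\<forall>j\<in>K. cinner (e j) x = 0)"
proof -
  define M :: "complex^'n^'n" where "M = (\<chi> j i. if j \<in> K then cnj (e j $ i) else 0)"
  have M_apply: "(M *v x) $ j = (if j \<in> K then cinner (e j) x else 0)" for x j
    unfolding M_def matrix_vector_mult_def cinner_def by simp
  have "\<nexists>B. B ** M = mat 1"
  proof
    assume "\<exists>B. B ** M = mat 1"
    then obtain B where "M ** B = mat 1"
      using matrix_left_right_inverse by blast
    then have "(M ** B) $ a $ a = 1"
      by (simp add: mat_def)
    moreover have "(M ** B) $ a $ a = 0"
      using assms unfolding M_def matrix_matrix_mult_def by simp
    ultimately show False by simp
  qed
  then obtain x where "x \<noteq> 0" "M *v x = 0"
    using matrix_left_invertible_ker by blast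
  then show ?thesis
    using M_apply by (metis zero_index)
qed

lemma hermitian_preserves_orthogonal_eigenvector:
  assumes "hermitian A" and "A *v y = \<mu> *\<^sub>R y" and "cinner y x = 0"
  shows "cinner y (A *v x) = 0"
proof -
  have "cinner y (A *v x) = cinner (A *v y) x"
    by (simp add: cinner_hermitian[OF assms(1)])
  also have "\<dots> = complex_of_real \<mu> * cinner y x"
    by (simp add: assms(2) cinner_scaleR_left)
  finally show ?thesis
    using assms(3) by simp
qed

lemma abelian_orthonormal_eigenvectors:
  fixes \<iota> :: "'v::euclidean_space \<Rightarrow> complex^'n^'n" and K :: "'n set"
  assumes "linear \<iota>" and herm: "\<And>v. hermitian (\<iota> v)" and "abelian \<iota>"
  shows "\<exists>e. orthonormal_on e K \<and> (\<forall>j\<in>K. \<forall>v. \<exists>\<mu>::real. \<iota> v *v e j = \<mu> *\<^sub>R e j)"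
  using finite[of K]
proof (induction K rule: finite_induct)
  case empty
  then show ?case
    by (simp add: orthonormal_on_def)
next
  case (insert a K)
  then obtain e where orth: "orthonormal_on e K" and eig: "\<forall>j\<in>K. \<forall>v. \<exists>\<mu>::real. \<iota> v *v e j = \<mu> *\<^sub>R e j"
    by blast
  define S where "S = {x. \<forall>j\<in>K. cinner (e j) x = 0}"
  have S_subspace: "subspace S"
    unfolding subspace_def S_def by (simp add: cinner_add_right cinner_scaleR_right)
  have S_nonzero: "S \<noteq> {0}"
    using exists_nonzero_orthogonal[OF \<open>a \<notin> K\<close>, of e] unfolding S_def by blast
  have S_invariant: "\<iota> v *v x \<in> S" if "x \<in> S" for v x
  proof -
    have "cinner (e j) (\<iota> v *v x) = 0" if "j \<in> K" for j
    proof -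
      obtain \<mu> :: real where "\<iota> v *v e j = \<mu> *\<^sub>R e j"
        using eig \<open>j \<in> K\<close> by blast
      then show ?thesis
        using hermitian_preserves_orthogonal_eigenvector[OF herm] \<open>x \<in> S\<close> \<open>j \<in> K\<close>
        unfolding S_def by blast
    qed
    then show ?thesis
      unfolding S_def by blast
  qed
  obtain x where "x \<in> S" "x \<noteq> 0" and x_eig: "\<forall>v. \<exists>\<mu>::real. \<iota> v *v x = \<mu> *\<^sub>R x"
    using abelian_common_eigenvector[OF \<open>linear \<iota>\<close> herm \<open>abelian \<iota>\<close> S_subspace S_nonzero S_invariant]
    by blast
  define u where "u = x /\<^sub>R norm x"
  have "cinner u u = 1"
    using \<open>x \<noteq> 0\<close> by (simp add: u_def cinner_self)
  moreover have u_orth: "cinner (e j) u = 0" if "j \<in> K" for j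
    using \<open>x \<in> S\<close> that unfolding S_def u_def by (simp add: cinner_scaleR_right)
  moreover have "cinner u (e j) = 0" if "j \<in> K" for j
    using u_orth[OF that] cinner_commute[of u "e j"] by simp
  moreover have "\<exists>\<mu>::real. \<iota> v *v u = \<mu> *\<^sub>R u" for v
    using x_eig unfolding u_def by (metis matrix_vector_mult_scaleR_right scaleR_left_commute)
  ultimately have "orthonormal_on (e(a := u)) (insert a K)
      \<and> (\<forall>j\<in>insert a K. \<forall>v. \<exists>\<mu>::real. \<iota> v *v (e(a := u)) j = \<mu> *\<^sub>R (e(a := u)) j)"
    using orth eig \<open>a \<notin> K\<close> unfolding orthonormal_on_def by auto
  then show ?case
    by blast
qed

lemma abelian_orthonormal_eigenbasis:
  fixes \<iota> :: "'v::euclidean_space \<Rightarrow> complex^'n^'n"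
  assumes "linear \<iota>" and "\<And>v. hermitian (\<iota> v)" and "abelian \<iota>"
  obtains e :: "'n \<Rightarrow> complex^'n" and \<alpha> :: "'n \<Rightarrow> 'v \<Rightarrow> real"
  where "orthonormal_on e UNIV" "\<And>j v. \<iota> v *v e j = \<alpha> j v *\<^sub>R e j" "\<And>j. linear (\<alpha> j)"
proof -
  obtain e :: "'n \<Rightarrow> complex^'n" where onb: "orthonormal_on e UNIV"
    and eig: "\<forall>j v. \<exists>\<mu>::real. \<iota> v *v e j = \<mu> *\<^sub>R e j"
    using abelian_orthonormal_eigenvectors[OF assms, where K = UNIV] by auto
  define \<alpha> where "\<alpha> j v = e j \<bullet> (\<iota> v *v e j)" for j v
  have "\<iota> v *v e j = \<alpha> j v *\<^sub>R e j" for j v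
  proof -
    obtain \<mu> :: real where \<mu>: "\<iota> v *v e j = \<mu> *\<^sub>R e j"
      using eig by blast
    have "e j \<bullet> e j = 1"
      using onb unfolding orthonormal_on_def inner_vec_eq_Re_cinner by simp
    then show ?thesis
      using \<mu> by (simp add: \<alpha>_def)
  qed
  moreover have "linear (\<alpha> j)" for j
  proof -
    have "linear ((\<lambda>y. e j \<bullet> y) \<circ> (\<lambda>A. A *v e j) \<circ> \<iota>)"
      by (intro linear_compose \<open>linear \<iota>\<close> linear_matrix_vector_mult_left
          bounded_linear.linear[OF bounded_linear_inner_right])
    moreover have "\<alpha> j = (\<lambda>y. e j \<bullet> y) \<circ> (\<lambda>A. A *v e j) \<circ> \<iota>"
      by (simp add: fun_eq_iff \<alpha>_def)
    ultimately show ?thesis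
      by simp
  qed
  ultimately show ?thesis
    using that onb by blast
qed

lemma orthonormal_basis_unitary:
  fixes e :: "'n \<Rightarrow> complex^'n"
  assumes "orthonormal_on e UNIV"
  shows "(\<chi> i j. e j $ i) ** (\<chi> i j. cnj (e i $ j)) = mat 1"
proof -
  have "(\<chi> i j. cnj (e i $ j)) ** (\<chi> i j. e j $ i) = mat 1"
    using assms unfolding orthonormal_on_def cinner_def matrix_matrix_mult_def mat_def vec_eq_iff
    by simp
  then show ?thesis
    using matrix_left_right_inverse by blast
qed

lemma trace_eq_sum_orthonormal_basis:
  fixes e :: "'n \<Rightarrow> complex^'n"
  assumes "orthonormal_on e UNIV"
  shows "trace X = (\<Sum>j\<in>UNIV. cinner (e j) (X *v e j))"
proof -
  let ?U = "\<chi> i j. e j $ i" and ?U' = "\<chi> i j. cnj (e i $ j)"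
  have "trace X = trace ((X ** ?U) ** ?U')"
    by (simp flip: matrix_mul_assoc add: orthonormal_basis_unitary[OF assms])
  also have "\<dots> = trace (?U' ** (X ** ?U))"
    by (rule trace_mul_sym)
  also have "\<dots> = (\<Sum>j\<in>UNIV. cinner (e j) (X *v e j))"
    unfolding trace_def matrix_matrix_mult_def cinner_def matrix_vector_mult_def by simp
  finally show ?thesis .
qed

lemma orthonormal_basis_expansion:
  fixes e :: "'n \<Rightarrow> complex^'n"
  assumes "orthonormal_on e UNIV"
  shows "(\<Sum>j\<in>UNIV. cinner (e j) \<psi> *s e j) = \<psi>"
proof -
  let ?U = "\<chi> i j. e j $ i" and ?U' = "\<chi> i j. cnj (e i $ j)"
  have "(\<Sum>j\<in>UNIV. cinner (e j) \<psi> *s e j) = ?U *v (?U' *v \<psi>)"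
    unfolding matrix_mult_sum[of ?U]
    by (simp add: column_def matrix_vector_mult_def cinner_def vec_eq_iff)
  also have "\<dots> = \<psi>"
    by (simp add: matrix_vector_mul_assoc orthonormal_basis_unitary[OF assms])
  finally show ?thesis .
qed

lemma cinner_orthonormal_sum:
  assumes "orthonormal_on e K" and "finite K"
  shows "cinner (\<Sum>j\<in>K. a j *s e j) (\<Sum>j\<in>K. b j *s e j) = (\<Sum>j\<in>K. cnj (a j) * b j)"
proof -
  have "cinner (e j) (\<Sum>k\<in>K. b k *s e k) = b j" if "j \<in> K" for j
  proof -
    have "cinner (e j) (\<Sum>k\<in>K. b k *s e k) = (\<Sum>k\<in>K. if j = k then b k else 0)"
      using assms(1) that unfolding orthonormal_on_def
      by (intro trans[OF cinner_sum_right] sum.cong) (auto simp: cinner_scaleC_right)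
    then show ?thesis
      using assms(2) that by simp
  qed
  then show ?thesis
    by (simp add: cinner_sum_left cinner_scaleC_left)
qed

section \<open>Images of the states under the dual map\<close>

definition rank_one_projector :: "complex^'n \<Rightarrow> complex^'n^'n" where
  "rank_one_projector \<psi> = (\<chi> i j. \<psi>$i * cnj (\<psi>$j))"

lemma pure_states_eq: "pure_states = rank_one_projector ` {\<psi>. cinner \<psi> \<psi> = 1}"
  unfolding pure_states_def rank_one_projector_def by blast

lemma trace_rank_one_projector_mult: "trace (rank_one_projector \<psi> ** B) = cinner \<psi> (B *v \<psi>)"
proof -
  have "trace (rank_one_projector \<psi> ** B) = (\<Sum>i\<in>UNIV. \<Sum>k\<in>UNIV. \<psi>$i * cnj (\<psi>$k) * B$k$i)"
    unfolding trace_def rank_one_projector_def matrix_matrix_mult_def by simp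
  also have "\<dots> = (\<Sum>k\<in>UNIV. \<Sum>i\<in>UNIV. \<psi>$i * cnj (\<psi>$k) * B$k$i)"
    by (rule sum.swap)
  also have "\<dots> = cinner \<psi> (B *v \<psi>)"
    unfolding cinner_def matrix_vector_mult_def by (simp add: sum_distrib_left ac_simps)
  finally show ?thesis .
qed

lemma rank_one_projector_apply: "rank_one_projector \<psi> *v x = cinner \<psi> x *s \<psi>"
  unfolding rank_one_projector_def matrix_vector_mult_def cinner_def
  by (simp add: vec_eq_iff sum_distrib_left ac_simps)

lemma rank_one_projector_in_density_ops:
  assumes "cinner \<psi> \<psi> = 1"
  shows "rank_one_projector \<psi> \<in> density_ops"
proof -
  have "hermitian (rank_one_projector \<psi>)"
    unfolding hermitian_def rank_one_projector_def by (simp add: mult.commute)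
  moreover have "0 \<le> Re (cinner x (rank_one_projector \<psi> *v x))" for x
  proof -
    have "cinner x (rank_one_projector \<psi> *v x) = cinner \<psi> x * cnj (cinner \<psi> x)"
      by (simp add: rank_one_projector_apply cinner_scaleC_right cinner_commute[of x \<psi>])
    then show ?thesis
      by (simp add: complex_mult_cnj)
  qed
  moreover have "trace (rank_one_projector \<psi>) = 1"
    using trace_rank_one_projector_mult[of \<psi> "mat 1"] assms by simp
  ultimately show ?thesis
    unfolding density_ops_def by blast
qed

lemma pure_states_subset_density_ops: "pure_states \<subseteq> density_ops"
  unfolding pure_states_eq using rank_one_projector_in_density_ops by blast

lemma conv_dual_range_finite:
  fixes \<alpha> :: "'j::finite \<Rightarrow> 'v \<Rightarrow> real"
  shows "conv_dual (range \<alpha>) = {(\<lambda>v. \<Sum>j\<in>UNIV. d j * \<alpha> j v) | d. (\<forall>j. 0 \<le> d j) \<and> sum d UNIV = 1}"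
    (is "_ = ?R")
proof
  show "conv_dual (range \<alpha>) \<subseteq> ?R"
  proof
    fix y
    assume "y \<in> conv_dual (range \<alpha>)"
    then obtain m :: nat and c f where y: "y = (\<lambda>v. \<Sum>i<m. c i * f i v)"
      and cf: "\<forall>i<m. 0 \<le> c i \<and> f i \<in> range \<alpha>" and "(\<Sum>i<m. c i) = 1"
      unfolding conv_dual_def by blast
    from cf have "\<forall>i<m. \<exists>j. f i = \<alpha> j"
      by blast
    then obtain J where J: "\<forall>i<m. f i = \<alpha> (J i)"
      by metis
    define d where "d j = sum c {i \<in> {..<m}. J i = j}" for j
    have group: "(\<Sum>j\<in>UNIV. sum g {i \<in> {..<m}. J i = j}) = (\<Sum>i<m. g i)" for g :: "nat \<Rightarrow> real"
      by (rule sum.group) auto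
    have "\<forall>j. 0 \<le> d j"
      using cf unfolding d_def by (auto intro: sum_nonneg)
    moreover have "sum d UNIV = 1"
      using group[of c] \<open>(\<Sum>i<m. c i) = 1\<close> unfolding d_def by simp
    moreover have "y = (\<lambda>v. \<Sum>j\<in>UNIV. d j * \<alpha> j v)"
    proof
      fix v
      have "(\<Sum>j\<in>UNIV. d j * \<alpha> j v) = (\<Sum>j\<in>UNIV. \<Sum>i\<in>{i \<in> {..<m}. J i = j}. c i * f i v)"
        unfolding d_def sum_distrib_right using J by (intro sum.cong) auto
      then show "y v = (\<Sum>j\<in>UNIV. d j * \<alpha> j v)"
        unfolding y group by simp
    qed
    ultimately show "y \<in> ?R"
      by blast
  qed
next
  show "?R \<subseteq> conv_dual (range \<alpha>)"
  proof
    fix y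
    assume "y \<in> ?R"
    then obtain d where d: "\<forall>j. 0 \<le> d j" "sum d UNIV = 1" and y: "y = (\<lambda>v. \<Sum>j\<in>UNIV. d j * \<alpha> j v)"
      by blast
    obtain h where h: "bij_betw h {..<CARD('j)} (UNIV :: 'j set)"
      using ex_bij_betw_nat_finite[of "UNIV :: 'j set"] by (auto simp: atLeast0LessThan)
    have reindex: "(\<Sum>j\<in>UNIV. g j) = (\<Sum>i<CARD('j). g (h i))" for g :: "'j \<Rightarrow> real"
      using sum.reindex_bij_betw[OF h, of g] by simp
    have "y = (\<lambda>v. \<Sum>i<CARD('j). d (h i) * \<alpha> (h i) v)"
      unfolding y by (intro ext) (rule reindex)
    moreover have "(\<Sum>i<CARD('j). d (h i)) = 1"
      using reindex[of d] d(2) by simp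
    moreover have "\<forall>i<CARD('j). 0 \<le> d (h i) \<and> \<alpha> (h i) \<in> range \<alpha>"
      using d(1) by simp
    ultimately show "y \<in> conv_dual (range \<alpha>)"
      unfolding conv_dual_def mem_Collect_eq
      by (intro exI[of _ "CARD('j)"] exI[of _ "\<lambda>i. d (h i)"] exI[of _ "\<lambda>i. \<alpha> (h i)"]) simp
  qed
qed

lemma weights_eq_eigenvalues:
  fixes \<iota> :: "'v::real_vector \<Rightarrow> complex^'n^'n" and e :: "'n \<Rightarrow> complex^'n"
  assumes herm: "\<And>v. hermitian (\<iota> v)" and onb: "orthonormal_on e UNIV"
    and eig: "\<And>j v. \<iota> v *v e j = \<alpha> j v *\<^sub>R e j" and lin: "\<And>j. linear (\<alpha> j)"
  shows "weights \<iota> = range \<alpha>"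
proof
  show "range \<alpha> \<subseteq> weights \<iota>"
  proof
    fix \<beta>
    assume "\<beta> \<in> range \<alpha>"
    then obtain j where "\<beta> = \<alpha> j"
      by blast
    have "cinner (e j) (e j) = 1"
      using onb by (simp add: orthonormal_on_def)
    then have "e j \<noteq> 0"
      by auto
    moreover have "\<forall>v. \<iota> v *v e j = complex_of_real (\<alpha> j v) *s e j"
      by (simp add: eig scaleR_eq_scaleC)
    ultimately show "\<beta> \<in> weights \<iota>"
      using lin unfolding weights_def \<open>\<beta> = \<alpha> j\<close> by blast
  qed
next
  show "weights \<iota> \<subseteq> range \<alpha>"
  proof
    fix \<beta>
    assume "\<beta> \<in> weights \<iota>"
    then obtain \<psi> where "\<psi> \<noteq> 0" and \<psi>: "\<And>v. \<iota> v *v \<psi> = complex_of_real (\<beta> v) *s \<psi>"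
      unfolding weights_def by blast
    have "\<exists>j. cinner (e j) \<psi> \<noteq> 0"
    proof (rule ccontr)
      assume "\<nexists>j. cinner (e j) \<psi> \<noteq> 0"
      then have "\<psi> = 0"
        using orthonormal_basis_expansion[OF onb, of \<psi>] by simp
      with \<open>\<psi> \<noteq> 0\<close> show False ..
    qed
    then obtain j where j: "cinner (e j) \<psi> \<noteq> 0" ..
    have "\<beta> v = \<alpha> j v" for v
    proof -
      have "complex_of_real (\<beta> v) * cinner (e j) \<psi> = cinner (e j) (\<iota> v *v \<psi>)"
        by (simp add: \<psi> cinner_scaleC_right)
      also have "\<dots> = cinner (\<iota> v *v e j) \<psi>"
        by (simp add: cinner_hermitian[OF herm])
      also have "\<dots> = complex_of_real (\<alpha> j v) * cinner (e j) \<psi>"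
        by (simp add: eig cinner_scaleR_left)
      finally show ?thesis
        using j by simp
    qed
    then show "\<beta> \<in> range \<alpha>"
      by blast
  qed
qed

lemma dual_map_density_ops_subset_conv_dual:
  fixes \<iota> :: "'v \<Rightarrow> complex^'n^'n" and e :: "'n \<Rightarrow> complex^'n"
  assumes onb: "orthonormal_on e UNIV" and eig: "\<And>j v. \<iota> v *v e j = \<alpha> j v *\<^sub>R e j"
  shows "dual_map \<iota> ` density_ops \<subseteq> conv_dual (range \<alpha>)"
proof
  fix y
  assume "y \<in> dual_map \<iota> ` density_ops"
  then obtain \<Gamma> where \<Gamma>: "\<Gamma> \<in> density_ops" and y: "y = dual_map \<iota> \<Gamma>"
    by blast
  define d where "d j = Re (cinner (e j) (\<Gamma> *v e j))" for j
  have "\<forall>j. 0 \<le> d j"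
    using \<Gamma> unfolding density_ops_def d_def by blast
  moreover have "sum d UNIV = 1"
    using \<Gamma> trace_eq_sum_orthonormal_basis[OF onb, of \<Gamma>]
    unfolding density_ops_def d_def by (simp flip: Re_sum)
  moreover have "y = (\<lambda>v. \<Sum>j\<in>UNIV. d j * \<alpha> j v)"
  proof
    fix v
    have "y v = Re (\<Sum>j\<in>UNIV. cinner (e j) (\<Gamma> *v (\<iota> v *v e j)))"
      unfolding y dual_map_def trace_eq_sum_orthonormal_basis[OF onb]
      by (simp add: matrix_vector_mul_assoc)
    also have "\<dots> = (\<Sum>j\<in>UNIV. d j * \<alpha> j v)"
      by (simp add: eig matrix_vector_mult_scaleR_right cinner_scaleR_right Re_sum d_def mult.commute)
    finally show "y v = (\<Sum>j\<in>UNIV. d j * \<alpha> j v)" .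
  qed
  ultimately show "y \<in> conv_dual (range \<alpha>)"
    unfolding conv_dual_range_finite by blast
qed

lemma conv_dual_subset_dual_map_pure_states:
  fixes \<iota> :: "'v \<Rightarrow> complex^'n^'n" and e :: "'n \<Rightarrow> complex^'n"
  assumes onb: "orthonormal_on e UNIV" and eig: "\<And>j v. \<iota> v *v e j = \<alpha> j v *\<^sub>R e j"
  shows "conv_dual (range \<alpha>) \<subseteq> dual_map \<iota> ` pure_states"
proof
  fix y
  assume "y \<in> conv_dual (range \<alpha>)"
  then obtain d where d: "\<forall>j. 0 \<le> d j" "sum d UNIV = 1" and y: "y = (\<lambda>v. \<Sum>j\<in>UNIV. d j * \<alpha> j v)"
    unfolding conv_dual_range_finite by blast
  define a where "a j = complex_of_real (sqrt (d j))" for j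
  define \<psi> where "\<psi> = (\<Sum>j\<in>UNIV. a j *s e j)"
  have a_sq: "cnj (a j) * a j = complex_of_real (d j)" for j
    using d(1) unfolding a_def by (simp flip: of_real_mult)
  have "cinner \<psi> \<psi> = 1"
    unfolding \<psi>_def cinner_orthonormal_sum[OF onb finite[of UNIV]] a_sq
    using d(2) by (simp flip: of_real_sum)
  moreover have "dual_map \<iota> (rank_one_projector \<psi>) = y"
  proof
    fix v
    have "\<iota> v *v \<psi> = (\<Sum>j\<in>UNIV. (complex_of_real (\<alpha> j v) * a j) *s e j)"
      unfolding \<psi>_def matrix_vector_mult_sum_right matrix_vector_mult_scaleC_right eig
      by (simp add: scaleR_eq_scaleC mult.commute)
    then have "cinner \<psi> (\<iota> v *v \<psi>) = (\<Sum>j\<in>UNIV. complex_of_real (\<alpha> j v) * (cnj (a j) * a j))"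
      unfolding \<psi>_def by (simp add: cinner_orthonormal_sum[OF onb] mult_ac)
    also have "\<dots> = (\<Sum>j\<in>UNIV. complex_of_real (\<alpha> j v * d j))"
      by (simp add: a_sq)
    finally show "dual_map \<iota> (rank_one_projector \<psi>) v = y v"
      unfolding dual_map_def trace_rank_one_projector_mult y by (simp add: Re_sum mult.commute)
  qed
  ultimately show "y \<in> dual_map \<iota> ` pure_states"
    unfolding pure_states_eq by blast
qed

theorem theorem4p5:
  fixes \<iota> :: "'v::euclidean_space \<Rightarrow> complex^'n^'n" and W :: "complex^'n^'n"
  assumes "gft \<iota> W" and "abelian \<iota>"
  shows "dual_map \<iota> ` pure_states = dual_map \<iota> ` density_ops
       \<and> dual_map \<iota> ` density_ops = conv_dual (weights \<iota>)"
proof -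
  have lin: "linear \<iota>" and herm: "\<And>v. hermitian (\<iota> v)"
    using assms(1) unfolding gft_def by auto
  obtain e :: "'n \<Rightarrow> complex^'n" and \<alpha> where onb: "orthonormal_on e UNIV" and eig: "\<And>j v. \<iota> v *v e j = \<alpha> j v *\<^sub>R e j"
    and lin_\<alpha>: "\<And>j. linear (\<alpha> j)"
    using abelian_orthonormal_eigenbasis[OF lin herm assms(2)] by blast
  have "weights \<iota> = range \<alpha>"
    by (rule weights_eq_eigenvalues[OF herm onb eig lin_\<alpha>])
  moreover have "dual_map \<iota> ` pure_states \<subseteq> dual_map \<iota> ` density_ops"
    by (rule image_mono[OF pure_states_subset_density_ops])
  moreover have "dual_map \<iota> ` density_ops \<subseteq> conv_dual (range \<alpha>)"
    by (rule dual_map_density_ops_subset_conv_dual[OF onb eig])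
  moreover have "conv_dual (range \<alpha>) \<subseteq> dual_map \<iota> ` pure_states"
    by (rule conv_dual_subset_dual_map_pure_states[OF onb eig])
  ultimately show ?thesis
    by (simp add: subset_antisym)
qed

end
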